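(* Let $\tau\in\mathbb{C}$. The functional $I_{\overline{\mathcal{T}}}:\phi\mapsto\beta_{f_\phi}(\tau)$ is continuous on $\overline{\mathcal{T}}$ (closure taken in the Banach space $E_1$).
   Context: $\Delta$ is the unit disk. $E_1$ is the Banach space of analytic $\phi$ on $\Delta$ with $\|\phi\|_{E_1}=\sup_{z\in\Delta}|\phi(z)|(1-|z|^2)<\infty$. For locally univalent $f$, $N_f=f''/f'$. $\mathcal{S}_q$ is the class of bounded univalent $f$ on $\Delta$ with $f(0)=0,f'(0)=1$ admitting a quasiconformal extension to $\widehat{\mathbb{C}}$. $\mathcal{T}=\{N_f:f\in\mathcal{S}_q\}\subset E_1$ and $\overline{\mathcal{T}}$ is its closure in $E_1$. For $\phi\in\overline{\mathcal{T}}$, $f_\phi(z)=\int_0^z\exp\left(\int_0^\zeta\phi(w)dw\right)d\zeta$; this is univalent in $\Delta$ with $f_\phi(0)=0,f_\phi'(0)=1$ and $N_{f_\phi}=\phi$. For such $f$ and $\tau\in\mathbb{C}$, $[f'(z)]^\tau=\exp(\tau\log f'(z))$ with $\log f'(0)=0$, and $\beta_f(\tau)=\limsup_{r\to1^-}\frac{\log\int_{-\pi}^{\pi}|[f'(re^{i\theta})]^\tau|d\theta}{|\log(1-r)|}$. *)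

theory Defs
  imports "HOL-Complex_Analysis.Complex_Analysis"
begin

abbreviation Disk :: "complex set" where "Disk \<equiv> ball 0 1"

text \<open>Metric definition of quasiconformality (Gehring/Vaisala): for a homeomorphism F,
  H_F(z) = limsup_{r->0+} L_F(z,r)/l_F(z,r), where L (resp. l) is the max (resp. min)
  of |F w - F z| over |w - z| = r; F is quasiconformal iff H_F is bounded.\<close>
definition qc_Lmax :: "(complex \<Rightarrow> complex) \<Rightarrow> complex \<Rightarrow> real \<Rightarrow> real" where
  "qc_Lmax F z r = Sup ((\<lambda>w. cmod (F w - F z)) ` sphere z r)"

definition qc_lmin :: "(complex \<Rightarrow> complex) \<Rightarrow> complex \<Rightarrow> real \<Rightarrow> real" where
  "qc_lmin F z r = Inf ((\<lambda>w. cmod (F w - F z)) ` sphere z r)"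

definition qc_dilatation :: "(complex \<Rightarrow> complex) \<Rightarrow> complex \<Rightarrow> ereal" where
  "qc_dilatation F z = Limsup (at_right 0) (\<lambda>r. ereal (qc_Lmax F z r / qc_lmin F z r))"

definition quasiconformal :: "(complex \<Rightarrow> complex) \<Rightarrow> bool" where
  "quasiconformal F \<longleftrightarrow> (\<exists>G. homeomorphism UNIV UNIV F G) \<and>
     (\<exists>K::real. \<forall>z. qc_dilatation F z \<le> ereal K)"

definition Sq :: "(complex \<Rightarrow> complex) set" where
  "Sq = {f. f holomorphic_on Disk \<and> inj_on f Disk \<and> bounded (f ` Disk) \<and>
            f 0 = 0 \<and> deriv f 0 = 1 \<and>
            (\<exists>F. quasiconformal F \<and> (\<forall>z\<in>Disk. F z = f z))}"

definition preschwarz :: "(complex \<Rightarrow> complex) \<Rightarrow> complex \<Rightarrow> complex" where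
  "preschwarz f z = deriv (deriv f) z / deriv f z"

text \<open>The weighted sup-norm of E_1 (extended-real valued, = \<infinity> outside E_1).\<close>
definition E1norm :: "(complex \<Rightarrow> complex) \<Rightarrow> ereal" where
  "E1norm \<phi> = (SUP z\<in>Disk. ereal (cmod (\<phi> z) * (1 - (cmod z)\<^sup>2)))"

definition E1 :: "(complex \<Rightarrow> complex) set" where
  "E1 = {\<phi>. \<phi> holomorphic_on Disk \<and> E1norm \<phi> < \<infinity>}"

definition TT :: "(complex \<Rightarrow> complex) set" where
  "TT = preschwarz ` Sq"

definition TT_closure :: "(complex \<Rightarrow> complex) set" where
  "TT_closure = {\<phi>\<in>E1. \<forall>e>0. \<exists>\<psi>\<in>TT. E1norm (\<lambda>z. \<phi> z - \<psi> z) < ereal e}"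

definition f_of :: "(complex \<Rightarrow> complex) \<Rightarrow> complex \<Rightarrow> complex" where
  "f_of \<phi> z = contour_integral (linepath 0 z)
      (\<lambda>\<zeta>. exp (contour_integral (linepath 0 \<zeta>) \<phi>))"

definition logderiv_branch :: "(complex \<Rightarrow> complex) \<Rightarrow> complex \<Rightarrow> complex" where
  "logderiv_branch f = (SOME g. g holomorphic_on Disk \<and> g 0 = 0 \<and>
                           (\<forall>z\<in>Disk. exp (g z) = deriv f z))"

definition deriv_pow :: "(complex \<Rightarrow> complex) \<Rightarrow> complex \<Rightarrow> complex \<Rightarrow> complex" where
  "deriv_pow f \<tau> z = exp (\<tau> * logderiv_branch f z)"

definition beta :: "(complex \<Rightarrow> complex) \<Rightarrow> complex \<Rightarrow> ereal" where
  "beta f \<tau> = Limsup (at_left 1)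
     (\<lambda>r::real. ereal (ln (integral {-pi..pi} (\<lambda>\<theta>. cmod (deriv_pow f \<tau> (complex_of_real r * cis \<theta>))))
                       / \<bar>ln (1 - r)\<bar>))"

end

theory Submission
  imports Defs
begin

text \<open>
  For \<open>\<phi>\<close> holomorphic on the disk, \<open>f_\<phi>' = exp P_\<phi>\<close> where \<open>P_\<phi> z\<close> is the integral of
  \<open>\<phi>\<close> over the radius \<open>[0, z]\<close>, so the branch \<open>[f_\<phi>']^\<tau>\<close> is \<open>exp (\<tau> P_\<phi>)\<close>.
  If \<open>|\<phi> - \<psi>| (1 - |w|^2) \<le> d\<close> on the disk, integrating along the radius gives
  \<open>|P_\<phi> z - P_\<psi> z| \<le> d log (1 / (1 - |z|))\<close>. Hence the integral means of \<open>|[f_\<phi>']^\<tau>|\<close>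
  and \<open>|[f_\<psi>']^\<tau>|\<close> over the circle of radius \<open>r\<close> differ at most by the factor
  \<open>(1 - r) powr (- |\<tau>| d)\<close>, and so \<open>beta (f_\<phi>) \<tau> \<le> beta (f_\<psi>) \<tau> + |\<tau>| d\<close>.
  Thus \<open>\<phi> \<mapsto> beta (f_\<phi>) \<tau>\<close> is \<open>|\<tau>|\<close>-Lipschitz for the \<open>E_1\<close> norm (with values in the
  extended reals), which gives continuity; membership in the closure of \<open>T\<close> is only used to
  know that \<open>\<phi>\<close> is holomorphic.
\<close>

lemma ereal_open_absorbs_bounded_shifts:
  fixes U :: "ereal set"
  assumes U: "open U" "a \<in> U" and c: "c \<ge> 0"
  shows "\<exists>\<delta>>0. \<forall>b. a \<le> b + ereal (c * \<delta>) \<and> b \<le> a + ereal (c * \<delta>) \<longrightarrow> b \<in> U"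
proof (cases a)
  case (real x)
  have "open (ereal -` U)"
    using U(1) by (blast elim: ereal_openE)
  moreover have "x \<in> ereal -` U"
    using U(2) real by simp
  ultimately obtain e where e: "e > 0" "\<And>y. dist y x < e \<Longrightarrow> ereal y \<in> U"
    unfolding open_dist by blast
  define \<delta> where "\<delta> = e / (c + 1)"
  have \<delta>: "\<delta> > 0" "c * \<delta> < e"
    using e c by (auto simp: \<delta>_def field_simps)
  show ?thesis
  proof (intro exI[of _ \<delta>] conjI allI impI \<delta>(1))
    fix b assume "a \<le> b + ereal (c * \<delta>) \<and> b \<le> a + ereal (c * \<delta>)"
    then obtain y where "b = ereal y" "\<bar>y - x\<bar> \<le> c * \<delta>"
      using real by (cases b) auto
    then show "b \<in> U"
      using e \<delta> by (simp add: dist_real_def)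
  qed
next
  case PInf
  have "b \<in> U" if "a \<le> b + ereal c" for b
    using that U(2) PInf by (cases b) auto
  then show ?thesis
    by (intro exI[of _ 1]) auto
next
  case MInf
  have "b \<in> U" if "b \<le> a + ereal c" for b
    using that U(2) MInf by (cases b) auto
  then show ?thesis
    by (intro exI[of _ 1]) auto
qed

lemma holomorphic_logs_eq:
  assumes g: "g holomorphic_on S" and h: "h holomorphic_on S" and S: "open S" "connected S"
    and exp_eq: "\<And>w. w \<in> S \<Longrightarrow> exp (g w) = exp (h w)"
    and a: "a \<in> S" "g a = h a" and z: "z \<in> S"
  shows "g z = h z"
proof -
  define k where "k w = g w - h w" for w
  have k_holo: "k holomorphic_on S"
    unfolding k_def using g h by (intro holomorphic_intros)
  have exp_k: "exp (k w) = 1" if "w \<in> S" for w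
    using exp_eq[OF that] by (simp add: k_def exp_diff)
  have "DERIV k w :> 0" if w: "w \<in> S" for w
  proof -
    obtain D where D: "DERIV k w :> D"
      using k_holo w S(1) by (auto simp: holomorphic_on_open)
    have "((\<lambda>x. exp (k x)) has_field_derivative exp (k w) * D) (at w)"
      using D by (auto intro!: derivative_eq_intros)
    then have "((\<lambda>x. 1) has_field_derivative exp (k w) * D) (at w)"
      by (rule has_field_derivative_transform_within_open[OF _ S(1) w]) (simp add: exp_k)
    then have "D = 0"
      using DERIV_unique[OF _ DERIV_const] exp_k[OF w] by fastforce
    then show ?thesis using D by simp
  qed
  moreover have "continuous_on S k"
    using k_holo by (rule holomorphic_on_imp_continuous_on)
  ultimately obtain c where "\<And>w. w \<in> S \<Longrightarrow> k w = c"
    using DERIV_zero_connected_constant[OF S(2,1) finite.emptyI] by blast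
  then have "k z = k a"
    using a(1) z by simp
  then show ?thesis
    using a(2) by (simp add: k_def)
qed

lemma has_integral_div_one_minus_mult:
  fixes r :: real
  assumes r: "0 \<le> r" "r < 1"
  shows "((\<lambda>t. r / (1 - t * r)) has_integral - ln (1 - r)) {0..1}"
proof -
  have "((\<lambda>t. - ln (1 - t * r)) has_vector_derivative r / (1 - t * r)) (at t within {0..1})"
    if t: "t \<in> {0..1}" for t
  proof -
    have "t * r \<le> r" using t r by (simp add: mult_left_le_one_le)
    then have "1 - t * r > 0" using r by linarith
    then have "((\<lambda>t. - ln (1 - t * r)) has_real_derivative r / (1 - t * r)) (at t)"
      by (auto intro!: derivative_eq_intros simp: field_simps)
    then show ?thesis
      by (simp add: has_real_derivative_iff_has_vector_derivative has_vector_derivative_at_within)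
  qed
  from fundamental_theorem_of_calculus[OF _ this] show ?thesis by simp
qed

definition radial_primitive :: "(complex \<Rightarrow> complex) \<Rightarrow> complex \<Rightarrow> complex" where
  "radial_primitive \<phi> z = contour_integral (linepath 0 z) \<phi>"

lemma radial_primitive_0 [simp]: "radial_primitive \<phi> 0 = 0"
  unfolding radial_primitive_def by (rule contour_integral_unique) simp

lemma has_contour_integral_radial_primitive:
  assumes "continuous_on (closed_segment 0 z) \<phi>"
  shows "(\<phi> has_contour_integral radial_primitive \<phi> z) (linepath 0 z)"
  unfolding radial_primitive_def
  using contour_integrable_continuous_linepath[OF assms] by (rule has_contour_integral_integral)

lemma radial_primitive_diff:
  assumes "continuous_on (closed_segment 0 z) \<phi>" "continuous_on (closed_segment 0 z) \<psi>"
  shows "radial_primitive (\<lambda>w. \<phi> w - \<psi> w) z = radial_primitive \<phi> z - radial_primitive \<psi> z"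
  using has_contour_integral_diff[OF assms[THEN has_contour_integral_radial_primitive]]
  unfolding radial_primitive_def by (rule contour_integral_unique)

lemma radial_primitive_has_field_derivative:
  assumes holo: "\<phi> holomorphic_on S" and S: "open S" "convex S" "0 \<in> S" and z: "z \<in> S"
  shows "(radial_primitive \<phi> has_field_derivative \<phi> z) (at z)"
  unfolding radial_primitive_def[abs_def]
proof (rule triangle_contour_integrals_starlike_primitive[OF _ S(3,1) z])
  show "continuous_on S \<phi>"
    using holo by (rule holomorphic_on_imp_continuous_on)
  show "closed_segment 0 y \<subseteq> S" if "y \<in> S" for y
    using that S by (simp add: closed_segment_subset)
  show "contour_integral (linepath 0 b) \<phi> + contour_integral (linepath b c) \<phi> +
          contour_integral (linepath c 0) \<phi> = 0" if "closed_segment b c \<subseteq> S" for b c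
  proof -
    have "b \<in> S" "c \<in> S" using that by auto
    then have "(\<phi> has_contour_integral 0) (linepath 0 b +++ linepath b c +++ linepath c 0)"
      using S by (intro Cauchy_theorem_convex_simple[OF holo S(2)])
        (auto simp: path_image_join closed_segment_subset)
    then show ?thesis
      using has_chain_integral_chain_integral3 by blast
  qed
qed

lemma holomorphic_on_radial_primitive:
  assumes "\<phi> holomorphic_on S" "open S" "convex S" "0 \<in> S"
  shows "radial_primitive \<phi> holomorphic_on S"
  using radial_primitive_has_field_derivative[OF assms] assms(2)
  by (auto simp: holomorphic_on_open)

lemma f_of_eq_radial_primitive: "f_of \<phi> = radial_primitive (\<lambda>\<zeta>. exp (radial_primitive \<phi> \<zeta>))"
  unfolding f_of_def[abs_def] radial_primitive_def[abs_def] ..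

lemma deriv_f_of:
  assumes "\<phi> holomorphic_on Disk" "z \<in> Disk"
  shows "deriv (f_of \<phi>) z = exp (radial_primitive \<phi> z)"
proof -
  have "(\<lambda>\<zeta>. exp (radial_primitive \<phi> \<zeta>)) holomorphic_on Disk"
    using holomorphic_on_radial_primitive[OF assms(1)] by (auto intro!: holomorphic_intros)
  from radial_primitive_has_field_derivative[OF this _ _ _ assms(2)] show ?thesis
    unfolding f_of_eq_radial_primitive by (auto intro: DERIV_imp_deriv)
qed

lemma logderiv_branch_f_of:
  assumes holo: "\<phi> holomorphic_on Disk" and z: "z \<in> Disk"
  shows "logderiv_branch (f_of \<phi>) z = radial_primitive \<phi> z"
proof -
  define P where "P g \<longleftrightarrow> g holomorphic_on Disk \<and> g 0 = 0 \<and>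
                           (\<forall>z\<in>Disk. exp (g z) = deriv (f_of \<phi>) z)" for g
  have "P (radial_primitive \<phi>)"
    using holomorphic_on_radial_primitive[OF holo] deriv_f_of[OF holo] by (simp add: P_def)
  \<comment> \<open>the choice in \<open>logderiv_branch\<close> is harmless: a holomorphic logarithm on the
    connected disk is determined by its value at \<open>0\<close>\<close>
  then have "P (logderiv_branch (f_of \<phi>))"
    unfolding logderiv_branch_def P_def[symmetric] by (rule someI[where P=P])
  then show ?thesis
    unfolding P_def
    by (intro holomorphic_logs_eq[OF _ holomorphic_on_radial_primitive[OF holo] open_ball
          connected_ball _ _ _ z, where a=0]) (simp_all add: deriv_f_of[OF holo])
qed

lemma deriv_pow_f_of:
  assumes "\<phi> holomorphic_on Disk" "z \<in> Disk"
  shows "deriv_pow (f_of \<phi>) \<tau> z = exp (\<tau> * radial_primitive \<phi> z)"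
  unfolding deriv_pow_def using logderiv_branch_f_of[OF assms] by simp

lemma closed_segment_0_subset_Disk: "z \<in> Disk \<Longrightarrow> closed_segment 0 z \<subseteq> Disk"
  by (simp add: closed_segment_subset)

lemma norm_radial_primitive_le:
  assumes cont: "continuous_on Disk \<kappa>" and z: "z \<in> Disk" and d: "d \<ge> 0"
    and bound: "\<And>w. w \<in> Disk \<Longrightarrow> cmod (\<kappa> w) * (1 - (cmod w)\<^sup>2) \<le> d"
  shows "cmod (radial_primitive \<kappa> z) \<le> d * - ln (1 - cmod z)"
proof -
  define r where "r = cmod z"
  have r: "0 \<le> r" "r < 1" using z by (auto simp: r_def)
  have "continuous_on (closed_segment 0 z) \<kappa>"
    using cont z by (rule continuous_on_subset[OF _ closed_segment_0_subset_Disk])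
  then have "(\<kappa> has_contour_integral radial_primitive \<kappa> z) (linepath 0 z)"
    by (rule has_contour_integral_radial_primitive)
  then have radial: "((\<lambda>t. \<kappa> (t *\<^sub>R z) * z) has_integral radial_primitive \<kappa> z) {0..1}"
    unfolding has_contour_integral_linepath by (simp add: linepath_def)
  have weight: "((\<lambda>t. d * (r / (1 - t * r))) has_integral d * - ln (1 - r)) {0..1}"
    using has_integral_div_one_minus_mult[OF r] by (rule has_integral_mult_right)
  have "norm (\<kappa> (t *\<^sub>R z) * z) \<le> d * (r / (1 - t * r))" if t: "t \<in> {0..1}" for t
  proof -
    have tr: "0 \<le> t * r" "t * r \<le> r" using t r by (auto simp: mult_left_le_one_le)
    have w: "t *\<^sub>R z \<in> Disk" "cmod (t *\<^sub>R z) = t * r"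
      using tr r t by (auto simp: r_def)
    have "(t * r)\<^sup>2 \<le> t * r"
      using tr r by (simp add: power2_eq_square mult_left_le_one_le)
    then have "cmod (\<kappa> (t *\<^sub>R z)) * (1 - t * r) \<le> cmod (\<kappa> (t *\<^sub>R z)) * (1 - (cmod (t *\<^sub>R z))\<^sup>2)"
      unfolding w(2) by (intro mult_left_mono) auto
    also have "\<dots> \<le> d"
      using bound[OF w(1)] .
    finally have "cmod (\<kappa> (t *\<^sub>R z)) * (1 - t * r) \<le> d" .
    then have "cmod (\<kappa> (t *\<^sub>R z)) \<le> d / (1 - t * r)"
      using tr r by (simp add: field_simps)
    then have "cmod (\<kappa> (t *\<^sub>R z)) * r \<le> d / (1 - t * r) * r"
      using r by (intro mult_right_mono)
    then show ?thesis
      by (simp add: norm_mult r_def[symmetric])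
  qed
  then have "norm (integral {0..1} (\<lambda>t. \<kappa> (t *\<^sub>R z) * z))
      \<le> integral {0..1} (\<lambda>t. d * (r / (1 - t * r)))"
    by (rule integral_norm_bound_integral[OF radial[THEN has_integral_integrable]
          weight[THEN has_integral_integrable]])
  then show ?thesis
    using integral_unique[OF radial] integral_unique[OF weight] by (simp add: r_def)
qed

lemma norm_deriv_pow_f_of_le:
  assumes \<phi>: "\<phi> holomorphic_on Disk" and \<psi>: "\<psi> holomorphic_on Disk" and d: "d \<ge> 0"
    and bound: "\<And>w. w \<in> Disk \<Longrightarrow> cmod (\<phi> w - \<psi> w) * (1 - (cmod w)\<^sup>2) \<le> d"
    and z: "z \<in> Disk"
  shows "cmod (deriv_pow (f_of \<phi>) \<tau> z)
           \<le> exp (cmod \<tau> * d * - ln (1 - cmod z)) * cmod (deriv_pow (f_of \<psi>) \<tau> z)"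
proof -
  let ?P = "radial_primitive \<phi> z" and ?Q = "radial_primitive \<psi> z"
  have cont: "continuous_on Disk \<phi>" "continuous_on Disk \<psi>"
    using \<phi> \<psi> by (simp_all add: holomorphic_on_imp_continuous_on)
  note segment = closed_segment_0_subset_Disk[OF z]
  have "radial_primitive (\<lambda>w. \<phi> w - \<psi> w) z = ?P - ?Q"
    using radial_primitive_diff[OF continuous_on_subset[OF cont(1) segment]
        continuous_on_subset[OF cont(2) segment]] .
  moreover have "cmod (radial_primitive (\<lambda>w. \<phi> w - \<psi> w) z) \<le> d * - ln (1 - cmod z)"
    using norm_radial_primitive_le[OF continuous_on_diff[OF cont] z d bound] .
  ultimately have PQ: "cmod (?P - ?Q) \<le> d * - ln (1 - cmod z)"
    by simp
  have "Re (\<tau> * ?P) - Re (\<tau> * ?Q) = Re (\<tau> * (?P - ?Q))"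
    by (simp add: algebra_simps)
  also have "\<dots> \<le> cmod \<tau> * cmod (?P - ?Q)"
    by (metis complex_Re_le_cmod norm_mult)
  also have "\<dots> \<le> cmod \<tau> * (d * - ln (1 - cmod z))"
    using PQ by (intro mult_left_mono) auto
  finally have "Re (\<tau> * ?P) \<le> Re (\<tau> * ?Q) + cmod \<tau> * d * - ln (1 - cmod z)"
    by simp
  then show ?thesis
    by (simp add: deriv_pow_f_of[OF \<phi> z] deriv_pow_f_of[OF \<psi> z] flip: exp_add)
qed

lemma circle_in_Disk:
  assumes "0 \<le> r" "r < 1"
  shows "of_real r * cis \<theta> \<in> Disk" "cmod (of_real r * cis \<theta>) = r"
  using assms by (auto simp: norm_mult)

definition integral_mean :: "(complex \<Rightarrow> complex) \<Rightarrow> complex \<Rightarrow> real \<Rightarrow> real" where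
  "integral_mean f \<tau> r = integral {-pi..pi} (\<lambda>\<theta>. cmod (deriv_pow f \<tau> (of_real r * cis \<theta>)))"

lemma continuous_on_deriv_pow_f_of_circle:
  assumes \<phi>: "\<phi> holomorphic_on Disk" and r: "0 \<le> r" "r < 1"
  shows "continuous_on {-pi..pi} (\<lambda>\<theta>. cmod (deriv_pow (f_of \<phi>) \<tau> (of_real r * cis \<theta>)))"
proof -
  have "continuous_on Disk (\<lambda>z. cmod (exp (\<tau> * radial_primitive \<phi> z)))"
    using holomorphic_on_radial_primitive[OF \<phi>]
    by (intro continuous_intros holomorphic_on_imp_continuous_on) auto
  moreover have "continuous_on {-pi..pi} (\<lambda>\<theta>. of_real r * cis \<theta>)"
    by (intro continuous_intros)
  moreover have "(\<lambda>\<theta>. of_real r * cis \<theta>) ` {-pi..pi} \<subseteq> Disk"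
    using circle_in_Disk(1)[OF r] by blast
  ultimately have "continuous_on {-pi..pi} (\<lambda>\<theta>. cmod (exp (\<tau> * radial_primitive \<phi> (of_real r * cis \<theta>))))"
    by (rule continuous_on_compose2)
  then show ?thesis
    by (simp add: deriv_pow_f_of[OF \<phi> circle_in_Disk(1)[OF r]])
qed

lemma integral_mean_f_of_pos:
  assumes \<phi>: "\<phi> holomorphic_on Disk" and r: "0 \<le> r" "r < 1"
  shows "integral_mean (f_of \<phi>) \<tau> r > 0"
proof -
  let ?g = "\<lambda>\<theta>. cmod (deriv_pow (f_of \<phi>) \<tau> (of_real r * cis \<theta>))"
  have cont: "continuous_on {-pi..pi} ?g"
    by (rule continuous_on_deriv_pow_f_of_circle[OF \<phi> r])
  have "{-pi..pi} \<noteq> {}"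
    by simp
  then obtain \<theta>\<^sub>0 where min: "\<forall>\<theta>\<in>{-pi..pi}. ?g \<theta>\<^sub>0 \<le> ?g \<theta>"
    using continuous_attains_inf[OF compact_Icc _ cont] by blast
  have "0 < integral {-pi..pi} (\<lambda>\<theta>. ?g \<theta>\<^sub>0)"
    by (simp add: deriv_pow_def)
  also have "\<dots> \<le> integral {-pi..pi} ?g"
    by (rule integral_le[OF integrable_const_ivl integrable_continuous_interval[OF cont] min[rule_format]])
  finally show ?thesis
    by (simp add: integral_mean_def)
qed

lemma integral_mean_f_of_le:
  assumes \<phi>: "\<phi> holomorphic_on Disk" and \<psi>: "\<psi> holomorphic_on Disk" and d: "d \<ge> 0"
    and bound: "\<And>w. w \<in> Disk \<Longrightarrow> cmod (\<phi> w - \<psi> w) * (1 - (cmod w)\<^sup>2) \<le> d"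
    and r: "0 \<le> r" "r < 1"
  shows "integral_mean (f_of \<phi>) \<tau> r \<le> exp (cmod \<tau> * d * - ln (1 - r)) * integral_mean (f_of \<psi>) \<tau> r"
proof -
  let ?K = "exp (cmod \<tau> * d * - ln (1 - r))"
  let ?g = "\<lambda>\<kappa> \<theta>. cmod (deriv_pow (f_of \<kappa>) \<tau> (of_real r * cis \<theta>))"
  have "integral {-pi..pi} (?g \<phi>) \<le> integral {-pi..pi} (\<lambda>\<theta>. ?K * ?g \<psi> \<theta>)"
  proof (rule integral_le)
    show "?g \<phi> integrable_on {-pi..pi}"
      by (rule integrable_continuous_interval[OF continuous_on_deriv_pow_f_of_circle[OF \<phi> r]])
    show "(\<lambda>\<theta>. ?K * ?g \<psi> \<theta>) integrable_on {-pi..pi}"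
      by (rule integrable_continuous_interval[OF continuous_on_mult_left,
            OF continuous_on_deriv_pow_f_of_circle[OF \<psi> r]])
    show "?g \<phi> \<theta> \<le> ?K * ?g \<psi> \<theta>" for \<theta>
      using norm_deriv_pow_f_of_le[OF \<phi> \<psi> d bound circle_in_Disk(1)[OF r, of \<theta>]]
      unfolding circle_in_Disk(2)[OF r] .
  qed
  then show ?thesis
    by (simp add: integral_mean_def)
qed

lemma beta_f_of_le:
  assumes \<phi>: "\<phi> holomorphic_on Disk" and \<psi>: "\<psi> holomorphic_on Disk" and d: "d \<ge> 0"
    and bound: "\<And>w. w \<in> Disk \<Longrightarrow> cmod (\<phi> w - \<psi> w) * (1 - (cmod w)\<^sup>2) \<le> d"
  shows "beta (f_of \<phi>) \<tau> \<le> beta (f_of \<psi>) \<tau> + ereal (cmod \<tau> * d)"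
proof -
  let ?q = "\<lambda>\<kappa> r. ln (integral_mean (f_of \<kappa>) \<tau> r) / \<bar>ln (1 - r)\<bar>"
  have key: "?q \<phi> r \<le> ?q \<psi> r + cmod \<tau> * d" if r: "r \<in> {0<..<1}" for r
  proof -
    have r': "0 \<le> r" "r < 1" and L: "\<bar>ln (1 - r)\<bar> = - ln (1 - r)" "- ln (1 - r) > 0"
      using r by auto
    have "ln (integral_mean (f_of \<phi>) \<tau> r)
            \<le> ln (exp (cmod \<tau> * d * - ln (1 - r)) * integral_mean (f_of \<psi>) \<tau> r)"
      using integral_mean_f_of_le[OF \<phi> \<psi> d bound r'] integral_mean_f_of_pos[OF \<phi> r']
        integral_mean_f_of_pos[OF \<psi> r'] by simp
    also have "\<dots> = ln (integral_mean (f_of \<psi>) \<tau> r) + cmod \<tau> * d * - ln (1 - r)"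
      using ln_mult_pos[OF exp_gt_zero integral_mean_f_of_pos[OF \<psi> r', where \<tau>=\<tau>]] by simp
    finally show ?thesis
      using L by (simp add: field_simps)
  qed
  have "eventually (\<lambda>r. r \<in> {0<..<1}) (at_left (1::real))"
    by (rule eventually_at_left_real) simp
  then have "eventually (\<lambda>r. ereal (?q \<phi> r) \<le> ereal (?q \<psi> r) + ereal (cmod \<tau> * d)) (at_left 1)"
    by (rule eventually_mono) (use key in simp)
  then have "Limsup (at_left 1) (\<lambda>r. ereal (?q \<phi> r))
               \<le> Limsup (at_left 1) (\<lambda>r. ereal (?q \<psi> r) + ereal (cmod \<tau> * d))"
    by (rule Limsup_mono)
  also have "\<dots> = Limsup (at_left 1) (\<lambda>r. ereal (?q \<psi> r)) + ereal (cmod \<tau> * d)"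
    by (rule Limsup_add_ereal_right) auto
  finally show ?thesis
    by (simp add: beta_def integral_mean_def)
qed

lemma E1norm_less_imp_weighted_le:
  assumes "E1norm \<kappa> < ereal \<delta>" "w \<in> Disk"
  shows "cmod (\<kappa> w) * (1 - (cmod w)\<^sup>2) \<le> \<delta>"
proof -
  have "ereal (cmod (\<kappa> w) * (1 - (cmod w)\<^sup>2)) \<le> E1norm \<kappa>"
    unfolding E1norm_def using assms(2) by (rule SUP_upper)
  then have "ereal (cmod (\<kappa> w) * (1 - (cmod w)\<^sup>2)) < ereal \<delta>"
    using assms(1) by (rule le_less_trans)
  then show ?thesis
    by simp
qed

theorem theorem3:
  fixes \<tau> :: complex
  shows "\<forall>\<phi>\<in>TT_closure. \<forall>U. open U \<and> beta (f_of \<phi>) \<tau> \<in> U \<longrightarrow>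
           (\<exists>\<delta>>0. \<forall>\<psi>\<in>TT_closure. E1norm (\<lambda>z. \<psi> z - \<phi> z) < ereal \<delta> \<longrightarrow>
                     beta (f_of \<psi>) \<tau> \<in> U)"
proof (intro ballI allI impI)
  fix \<phi> U assume \<phi>: "\<phi> \<in> TT_closure" and U: "open U \<and> beta (f_of \<phi>) \<tau> \<in> U"
  obtain \<delta> where \<delta>: "\<delta> > 0" and absorb: "\<And>b. beta (f_of \<phi>) \<tau> \<le> b + ereal (cmod \<tau> * \<delta>) \<Longrightarrow>
      b \<le> beta (f_of \<phi>) \<tau> + ereal (cmod \<tau> * \<delta>) \<Longrightarrow> b \<in> U"
    using ereal_open_absorbs_bounded_shifts[of U, OF _ _ norm_ge_zero] U by blast
  have "beta (f_of \<psi>) \<tau> \<in> U"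
    if \<psi>: "\<psi> \<in> TT_closure" and close: "E1norm (\<lambda>z. \<psi> z - \<phi> z) < ereal \<delta>" for \<psi>
  proof (rule absorb)
    have holo: "\<phi> holomorphic_on Disk" "\<psi> holomorphic_on Disk"
      using \<phi> \<psi> by (simp_all add: TT_closure_def E1_def)
    have bound: "cmod (\<psi> w - \<phi> w) * (1 - (cmod w)\<^sup>2) \<le> \<delta>" if "w \<in> Disk" for w
      using E1norm_less_imp_weighted_le[OF close that] .
    then show "beta (f_of \<psi>) \<tau> \<le> beta (f_of \<phi>) \<tau> + ereal (cmod \<tau> * \<delta>)"
      using beta_f_of_le[OF holo(2,1)] \<delta> by simp
    show "beta (f_of \<phi>) \<tau> \<le> beta (f_of \<psi>) \<tau> + ereal (cmod \<tau> * \<delta>)"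
      using beta_f_of_le[OF holo] bound \<delta> by (simp add: norm_minus_commute)
  qed
  with \<delta> show "\<exists>\<delta>>0. \<forall>\<psi>\<in>TT_closure. E1norm (\<lambda>z. \<psi> z - \<phi> z) < ereal \<delta> \<longrightarrow>
      beta (f_of \<psi>) \<tau> \<in> U"
    by blast
qed

end
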